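(* A system $C=(1,c_2,c_3,c_4,c_5,2c_5-c_2)$ is canonical and its subsystem $(1,c_2,c_3,c_4,c_5)$ is noncanonical if and only if $C=(1,2,3,c_4,c_4+1,2c_4)$ and $c_4>4$.
   Context: A system is a tuple $C=(c_1,\dots,c_n)$ of integers with $1=c_1<c_2<\dots<c_n$; for $k\le n$, $(c_1,\dots,c_k)$ is a subsystem. For a positive integer $v$, $\mathrm{opt}_C(v)$ is the minimum of $\sum_i x_i$ over $x\in\mathbb{Z}_{\ge0}^n$ with $\sum_i c_ix_i=v$. The greedy representation of $v$ is produced by: for $i=n$ down to $1$, while $c_i\le$ remaining value, take a coin $c_i$. $\mathrm{grd}_C(v)$ is its number of coins. A positive integer $w$ is a counterexample if $\mathrm{opt}_C(w)<\mathrm{grd}_C(w)$; $C$ is canonical if it has none, noncanonical otherwise. *)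

theory Defs
  imports Main
begin

definition is_system :: "nat list \<Rightarrow> bool" where
  "is_system C \<longleftrightarrow> C \<noteq> [] \<and> C ! 0 = 1 \<and> sorted_wrt (<) C"

fun grd_desc :: "nat list \<Rightarrow> nat \<Rightarrow> nat" where
  "grd_desc [] v = 0"
| "grd_desc (c # cs) v = v div c + grd_desc cs (v mod c)"

definition grd :: "nat list \<Rightarrow> nat \<Rightarrow> nat" where
  "grd C v = grd_desc (rev C) v"

definition opt :: "nat list \<Rightarrow> nat \<Rightarrow> nat" where
  "opt C v = (LEAST k. \<exists>x :: nat list. length x = length C \<and>
       (\<Sum>i<length C. C ! i * x ! i) = v \<and> (\<Sum>i<length C. x ! i) = k)"

definition counterexample :: "nat list \<Rightarrow> nat \<Rightarrow> bool" where
  "counterexample C w \<longleftrightarrow> w > 0 \<and> opt C w < grd C w"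

definition canonical :: "nat list \<Rightarrow> bool" where
  "canonical C \<longleftrightarrow> (\<forall>w. \<not> counterexample C w)"

end

theory Submission
  imports Defs
begin

text \<open>
  Sufficiency: for \<open>(1,2,3,m,m+1,2m)\<close> the greedy count has a closed form below \<open>2m\<close>
  and grows by one per multiple of \<open>2m\<close>; from it one checks that paying one more coin
  raises the greedy count by at most one, which already forces \<open>grd \<le> opt\<close>. The
  subsystem fails at \<open>2m = m + m\<close>, where greedy pays \<open>m + 1\<close> and then \<open>m - 1\<close> in coins
  \<open>\<le> 3\<close>, which needs at least two more coins once \<open>m > 4\<close>.

  Necessity: write \<open>A = (1,a,b,c,d)\<close> and \<open>e = 2d - a\<close>. Below \<open>e\<close> the systems \<open>A\<close> and
  \<open>C = A + (e)\<close> agree, so the least counterexample \<open>w\<close> of \<open>A\<close> is at least \<open>e\<close>.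
  Dropping one coin \<open>x\<close> from an optimal representation of \<open>w\<close> leaves a value where the
  greedy is optimal; this forces \<open>x \<le> c\<close> and \<open>w - x < d\<close>, hence \<open>e < c + d\<close>.
  Canonicity of \<open>C\<close> bounds the greedy count of the two-coin sums \<open>c + d\<close>, \<open>c + b\<close>
  and \<open>c + c\<close> by 2, which successively gives \<open>d = c + a - 1\<close>, \<open>b = 2a - 1\<close> and \<open>a = 2\<close>;
  the greedy count at \<open>c - 1\<close>, which the counterexample \<open>w = e\<close> makes large, rules
  out \<open>c = 4\<close>.
\<close>

lemma grd_desc_Cons_ge:
  "0 < c \<Longrightarrow> c \<le> v \<Longrightarrow> grd_desc (c # cs) v = Suc (grd_desc (c # cs) (v - c))"
  by (simp add: le_div_geq le_mod_geq)

lemma grd_desc_0 [simp]: "grd_desc cs 0 = 0"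
  by (induction cs) auto

lemma grd_desc_first_coin:
  assumes "\<forall>c\<in>set cs. 0 < c" "1 \<in> set cs" "0 < v"
  shows "\<exists>c\<in>set cs. c \<le> v \<and> grd_desc cs v = Suc (grd_desc cs (v - c))"
  using assms
proof (induction cs)
  case (Cons c cs)
  show ?case
  proof (cases "c \<le> v")
    case True
    then show ?thesis using grd_desc_Cons_ge[of c v cs] Cons.prems by auto
  next
    case False
    then have "c \<noteq> 1" using Cons.prems by auto
    then show ?thesis using Cons False by auto
  qed
qed simp

declare grd_desc.simps(2) [simp del]

lemma system_coin_pos: "is_system C \<Longrightarrow> c \<in> set C \<Longrightarrow> 0 < c"
  unfolding is_system_def
  by (metis gr0I in_set_conv_nth not_less_zero sorted_wrt_nth_less zero_less_one)

lemma system_one_coin: "is_system C \<Longrightarrow> 1 \<in> set C"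
  unfolding is_system_def by (metis length_greater_0_conv nth_mem)

lemma grd_first_coin:
  assumes "is_system C" "0 < v"
  shows "\<exists>c\<in>set C. c \<le> v \<and> grd C v = Suc (grd C (v - c))"
  using grd_desc_first_coin[of "rev C" v] system_coin_pos[OF assms(1)]
    system_one_coin[OF assms(1)] assms(2)
  unfolding grd_def by auto

lemma grd_0 [simp]: "grd C 0 = 0"
  by (simp add: grd_def)

lemma grd_pos: "is_system C \<Longrightarrow> 0 < v \<Longrightarrow> 0 < grd C v"
  by (metis grd_first_coin zero_less_Suc)

definition represents :: "nat list \<Rightarrow> nat \<Rightarrow> nat \<Rightarrow> bool" where
  "represents C v k \<longleftrightarrow> (\<exists>x :: nat list. length x = length C \<and>
       (\<Sum>i<length C. C ! i * x ! i) = v \<and> (\<Sum>i<length C. x ! i) = k)"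

lemma opt_eq_Least_represents: "opt C v = (LEAST k. represents C v k)"
  unfolding opt_def represents_def by simp

lemma sum_list_update_Suc:
  fixes x :: "nat list" and f :: "nat \<Rightarrow> nat"
  assumes "i < length x"
  shows "(\<Sum>j<length x. f j * x[i := Suc (x ! i)] ! j) = f i + (\<Sum>j<length x. f j * x ! j)"
proof -
  have "(\<Sum>j<length x. f j * x[i := Suc (x ! i)] ! j) =
      (\<Sum>j<length x. f j * x ! j + (if j = i then f i else 0))"
    using assms by (intro sum.cong) (auto simp: nth_list_update)
  then show ?thesis
    using assms by (simp add: sum.distrib)
qed

lemma represents_0: "represents C 0 0"
  unfolding represents_def by (intro exI[of _ "replicate (length C) 0"]) simp

lemma represents_add_coin:
  assumes "represents C u k" "c \<in> set C"
  shows "represents C (u + c) (Suc k)"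
proof -
  obtain i where i: "i < length C" "C ! i = c"
    using assms(2) by (auto simp: in_set_conv_nth)
  obtain x where x: "length x = length C"
    "(\<Sum>j<length C. C ! j * x ! j) = u" "(\<Sum>j<length C. x ! j) = k"
    using assms(1) unfolding represents_def by blast
  let ?y = "x[i := Suc (x ! i)]"
  have "(\<Sum>j<length C. C ! j * ?y ! j) = u + c"
    using sum_list_update_Suc[of i x "\<lambda>j. C ! j"] i x by simp
  moreover have "(\<Sum>j<length C. ?y ! j) = Suc k"
    using sum_list_update_Suc[of i x "\<lambda>j. 1"] i x by simp
  ultimately show ?thesis
    unfolding represents_def using x(1) by (intro exI[of _ ?y]) auto
qed

lemma represents_remove_coin:
  assumes "represents C v k" "0 < v"
  obtains c k' where "c \<in> set C" "c \<le> v" "k = Suc k'" "represents C (v - c) k'"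
proof -
  obtain x where x: "length x = length C"
    "(\<Sum>j<length C. C ! j * x ! j) = v" "(\<Sum>j<length C. x ! j) = k"
    using assms(1) unfolding represents_def by blast
  obtain i where i: "i < length C" "0 < x ! i"
    using x(2) assms(2) by (metis (no_types, lifting) gr0I mult_0_right sum.neutral lessThan_iff)
  let ?y = "x[i := x ! i - 1]"
  have y: "length ?y = length C" "?y[i := Suc (?y ! i)] = x"
    using i x by (auto simp: list_eq_iff_nth_eq nth_list_update)
  have v: "v = C ! i + (\<Sum>j<length C. C ! j * ?y ! j)"
    using sum_list_update_Suc[of i ?y "\<lambda>j. C ! j"] i y x by simp
  have k: "k = Suc (\<Sum>j<length C. ?y ! j)"
    using sum_list_update_Suc[of i ?y "\<lambda>j. 1"] i y x by simp
  have "represents C (v - C ! i) (\<Sum>j<length C. ?y ! j)"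
    unfolding represents_def using y(1) v by (intro exI[of _ ?y]) auto
  then show thesis
    using that[of "C ! i"] i v k by simp
qed

lemma represents_self:
  assumes "is_system C"
  shows "represents C v v"
proof (induction v)
  case 0
  show ?case by (rule represents_0)
next
  case (Suc v)
  then show ?case
    using represents_add_coin[OF Suc system_one_coin[OF assms]] by simp
qed

lemma represents_opt: "is_system C \<Longrightarrow> represents C v (opt C v)"
  unfolding opt_eq_Least_represents by (rule LeastI, rule represents_self)

lemma opt_le: "represents C v k \<Longrightarrow> opt C v \<le> k"
  unfolding opt_eq_Least_represents by (rule Least_le)

lemma opt_0 [simp]: "opt C 0 = 0"
  using opt_le[OF represents_0] by simp

lemma opt_le_Suc_opt_diff:
  assumes "is_system C" "c \<in> set C" "c \<le> v"
  shows "opt C v \<le> Suc (opt C (v - c))"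
  using opt_le[OF represents_add_coin[OF represents_opt[OF assms(1), of "v - c"] assms(2)]] assms(3)
  by simp

lemma opt_last_coin:
  assumes "is_system C" "0 < v"
  shows "\<exists>c\<in>set C. c \<le> v \<and> opt C v = Suc (opt C (v - c))"
proof -
  obtain c k where c: "c \<in> set C" "c \<le> v" "opt C v = Suc k" "represents C (v - c) k"
    using represents_remove_coin[OF represents_opt[OF assms(1)] assms(2)] by blast
  then have "opt C v = Suc (opt C (v - c))"
    using opt_le[OF c(4)] opt_le_Suc_opt_diff[OF assms(1) c(1,2)] by simp
  then show ?thesis using c by blast
qed

lemma opt_two_coins:
  assumes "is_system C" "x \<in> set C" "y \<in> set C"
  shows "opt C (x + y) \<le> 2"
  using opt_le[OF represents_add_coin[OF represents_add_coin[OF represents_0 assms(2)] assms(3)]]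
  by simp

lemma opt_le_grd:
  assumes "is_system C"
  shows "opt C v \<le> grd C v"
proof (induction v rule: less_induct)
  case (less v)
  show ?case
  proof (cases "v = 0")
    case False
    then obtain c where c: "c \<in> set C" "c \<le> v" "grd C v = Suc (grd C (v - c))"
      using grd_first_coin[OF assms] by blast
    have "opt C (v - c) \<le> grd C (v - c)"
      using less system_coin_pos[OF assms c(1)] False by simp
    then show ?thesis
      using opt_le_Suc_opt_diff[OF assms c(1,2)] c(3) by simp
  qed simp
qed

lemma canonical_iff_grd_le_opt: "canonical C \<longleftrightarrow> (\<forall>v. grd C v \<le> opt C v)"
  unfolding canonical_def counterexample_def by (metis grd_0 not_less zero_le gr0I)

lemma canonicalI:
  assumes "is_system C"
    and grd_add_coin: "\<And>u c. c \<in> set C \<Longrightarrow> grd C (u + c) \<le> Suc (grd C u)"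
  shows "canonical C"
  unfolding canonical_iff_grd_le_opt
proof
  show "grd C v \<le> opt C v" for v
  proof (induction v rule: less_induct)
    case (less v)
    show ?case
    proof (cases "v = 0")
      case False
      then obtain c where c: "c \<in> set C" "c \<le> v" "opt C v = Suc (opt C (v - c))"
        using opt_last_coin[OF assms(1)] by blast
      have "grd C (v - c) \<le> opt C (v - c)"
        using less system_coin_pos[OF assms(1) c(1)] False by simp
      then show ?thesis
        using grd_add_coin[OF c(1), of "v - c"] c(2,3) by simp
    qed simp
  qed
qed

lemma opt_mono_coins:
  assumes "is_system A" "is_system C" "\<And>c. c \<in> set C \<Longrightarrow> c \<le> v \<Longrightarrow> c \<in> set A"
  shows "opt A v \<le> opt C v"
  using assms(3)
proof (induction v rule: less_induct)
  case (less v)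
  show ?case
  proof (cases "v = 0")
    case False
    then obtain c where c: "c \<in> set C" "c \<le> v" "opt C v = Suc (opt C (v - c))"
      using opt_last_coin[OF assms(2)] by blast
    have "opt A (v - c) \<le> opt C (v - c)"
      using less system_coin_pos[OF assms(2) c(1)] False by simp
    then show ?thesis
      using opt_le_Suc_opt_diff[OF assms(1) less.prems[OF c(1,2)] c(2)] c(3) by simp
  qed simp
qed

lemma grd_append_less: "v < e \<Longrightarrow> grd (A @ [e]) v = grd A v"
  by (simp add: grd_def grd_desc.simps)

lemma grd_append_ge:
  "0 < e \<Longrightarrow> e \<le> v \<Longrightarrow> grd (A @ [e]) v = Suc (grd (A @ [e]) (v - e))"
  unfolding grd_def using grd_desc_Cons_ge by simp

lemma grd_1_Cons_less: "\<forall>x\<in>set cs. v < x \<Longrightarrow> grd (1 # cs) v = v"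
proof -
  have "\<forall>x\<in>set ds. v < x \<Longrightarrow> grd_desc (ds @ [1]) v = v" for ds
    by (induction ds) (auto simp: grd_desc.simps)
  then show "\<forall>x\<in>set cs. v < x \<Longrightarrow> grd (1 # cs) v = v"
    by (simp add: grd_def)
qed

lemma opt_append_less:
  assumes "is_system A" "is_system (A @ [e])" "v < e"
  shows "opt (A @ [e]) v = opt A v"
  using opt_mono_coins[OF assms(1,2), of v] opt_mono_coins[OF assms(2,1), of v] assms(3)
  by fastforce

lemma counterexample_ge_appended_coin:
  assumes "is_system A" "is_system (A @ [e])" "canonical (A @ [e])" "counterexample A w"
  shows "e \<le> w"
proof (rule ccontr)
  assume "\<not> e \<le> w"
  then have "counterexample (A @ [e]) w"
    using assms(4) grd_append_less opt_append_less[OF assms(1,2)]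
    unfolding counterexample_def by simp
  then show False using assms(3) unfolding canonical_def by blast
qed

lemma least_counterexample_witness:
  assumes sys: "is_system (B @ [d])"
    and w: "counterexample (B @ [d]) w"
    and least: "\<And>v. v < w \<Longrightarrow> \<not> counterexample (B @ [d]) v"
  shows "\<exists>c\<in>set B. c \<le> w \<and> w - c < d \<and> grd (B @ [d]) (w - c) < opt (B @ [d]) w"
proof -
  let ?A = "B @ [d]"
  have w0: "0 < w" and cex: "opt ?A w < grd ?A w"
    using w unfolding counterexample_def by auto
  have grd_below: "grd ?A v \<le> opt ?A v" if "v < w" for v
    using least[OF that] unfolding counterexample_def by (cases "v = 0") auto
  have d0: "0 < d" using system_coin_pos[OF sys] by simp
  note grd_d = grd_append_ge[OF d0, of _ B]
  obtain c where c: "c \<in> set ?A" "c \<le> w" "opt ?A w = Suc (opt ?A (w - c))"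
    using opt_last_coin[OF sys w0] by blast
  have "grd ?A (w - c) \<le> opt ?A (w - c)"
    using grd_below system_coin_pos[OF sys c(1)] w0 by simp
  then have opt_w: "Suc (grd ?A (w - c)) = opt ?A w"
    using opt_le_grd[OF sys, of "w - c"] c(3) by simp
  have "c \<noteq> d"
    using opt_w cex grd_d c(2) by auto
  moreover have "w - c < d"
  proof (rule ccontr)
    assume "\<not> w - c < d"
    then have d_le: "d \<le> w - c" by simp
    have "opt ?A (w - d) \<le> Suc (opt ?A (w - d - c))"
      using opt_le_Suc_opt_diff[OF sys c(1), of "w - d"] c(2) d_le by simp
    moreover have "opt ?A (w - d - c) \<le> grd ?A (w - d - c)"
      by (rule opt_le_grd[OF sys])
    moreover have "grd ?A (w - d) \<le> opt ?A (w - d)"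
      using grd_below d0 d_le by simp
    ultimately show False
      using opt_w cex grd_d[of w] grd_d[of "w - c"] d_le
      by (simp add: add.commute)
  qed
  ultimately show ?thesis
    using c opt_w by auto
qed

lemma grd_le_1_imp_coin:
  assumes "is_system C" "grd C v \<le> 1"
  shows "v = 0 \<or> v \<in> set C"
proof (cases "v = 0")
  case False
  then obtain c where c: "c \<in> set C" "c \<le> v" "grd C v = Suc (grd C (v - c))"
    using grd_first_coin[OF assms(1)] by blast
  then have "v - c = 0"
    using assms(2) grd_pos[OF assms(1), of "v - c"] by linarith
  then show ?thesis using c by simp
qed simp

lemma canonical_grd_two_coins:
  assumes "is_system C" "canonical C" "x \<in> set C" "y \<in> set C"
  shows "grd C (x + y) \<le> 2"
  using assms(2) opt_two_coins[OF assms(1,3,4)] unfolding canonical_iff_grd_le_opt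
  by (meson order_trans)

lemma grd_321: "grd [1,2,3] v = (v + 2) div 3"
proof (induction v rule: less_induct)
  case (less v)
  show ?case
  proof (cases "v < 3")
    case True
    then have "v = 0 \<or> v = 1 \<or> v = 2" by auto
    then show ?thesis by (auto simp: grd_def grd_desc.simps)
  next
    case False
    then have "grd [1,2,3] v = Suc (grd [1,2,3] (v - 3))"
      using grd_append_ge[of 3 v "[1,2]"] by simp
    then show ?thesis using less[of "v - 3"] False by (simp add: le_div_geq)
  qed
qed

definition grd_family_residue :: "nat \<Rightarrow> nat \<Rightarrow> nat" where
  "grd_family_residue m v =
     (if v < m then (v + 2) div 3 else if v = m then 1 else Suc ((v - (m + 1) + 2) div 3))"

lemma grd_family_less:
  assumes "4 < m" "v < 2 * m"
  shows "grd [1,2,3,m,m+1,2*m] v = grd_family_residue m v"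
proof -
  have top: "grd [1,2,3,m,m+1,2*m] v = grd [1,2,3,m,m+1] v"
    using grd_append_less[of v "2*m" "[1,2,3,m,m+1]"] assms(2) by simp
  consider "v < m" | "v = m" | "m < v" by linarith
  then show ?thesis
  proof cases
    case 1
    then have "grd [1,2,3,m,m+1] v = grd [1,2,3] v"
      using grd_append_less[of v "m+1" "[1,2,3,m]"] grd_append_less[of v m "[1,2,3]"] by simp
    then show ?thesis using 1 top grd_321 by (simp add: grd_family_residue_def)
  next
    case 2
    then have "grd [1,2,3,m,m+1] v = grd [1,2,3,m] m"
      using grd_append_less[of m "m+1" "[1,2,3,m]"] by simp
    also have "\<dots> = 1"
      using grd_append_ge[of m m "[1,2,3]"] assms(1) by simp
    finally show ?thesis using 2 top by (simp add: grd_family_residue_def)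
  next
    case 3
    have "grd [1,2,3,m,m+1] v = Suc (grd [1,2,3,m,m+1] (v - (m+1)))"
      using grd_append_ge[of "m+1" v "[1,2,3,m]"] 3 by simp
    also have "grd [1,2,3,m,m+1] (v - (m+1)) = grd [1,2,3] (v - (m+1))"
      using grd_append_less[of "v - (m+1)" "m+1" "[1,2,3,m]"]
        grd_append_less[of "v - (m+1)" m "[1,2,3]"] assms by simp
    finally show ?thesis
      using 3 top grd_321[of "v - (m+1)"] by (simp add: grd_family_residue_def)
  qed
qed

lemma grd_family_ge:
  "0 < m \<Longrightarrow> 2 * m \<le> v \<Longrightarrow> grd [1,2,3,m,m+1,2*m] v = Suc (grd [1,2,3,m,m+1,2*m] (v - 2 * m))"
  using grd_append_ge[of "2*m" v "[1,2,3,m,m+1]"] by simp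

lemma grd_family_residue_add_coin:
  "4 < m \<Longrightarrow> c \<in> {1,2,3,m,m+1} \<Longrightarrow> u + c < 2 * m \<Longrightarrow>
    grd_family_residue m (u + c) \<le> Suc (grd_family_residue m u)"
  unfolding grd_family_residue_def by (auto split: if_splits)

lemma grd_family_residue_add_coin_wrap:
  "4 < m \<Longrightarrow> c \<in> {1,2,3,m,m+1} \<Longrightarrow> u < 2 * m \<Longrightarrow> 2 * m \<le> u + c \<Longrightarrow>
    grd_family_residue m (u + c - 2 * m) \<le> grd_family_residue m u"
  unfolding grd_family_residue_def by (auto split: if_splits)

lemma canonical_family:
  assumes "4 < m"
  shows "canonical [1,2,3,m,m+1,2*m]"
proof (rule canonicalI)
  show "is_system [1,2,3,m,m+1,2*m]"
    using assms by (simp add: is_system_def)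
next
  fix u c assume c: "c \<in> set [1,2,3,m,m+1,2*m]"
  let ?G = "grd [1,2,3,m,m+1,2*m]"
  show "?G (u + c) \<le> Suc (?G u)"
  proof (cases "c = 2 * m")
    case True
    then show ?thesis using grd_family_ge[of m "u + c"] assms by simp
  next
    case False
    then have c5: "c \<in> {1,2,3,m,m+1}" using c by auto
    show ?thesis
    proof (induction u rule: less_induct)
      case (less u)
      consider "2 * m \<le> u" | "u + c < 2 * m" | "u < 2 * m" "2 * m \<le> u + c" by linarith
      then show ?case
      proof cases
        case 1
        have "?G (u + c) = Suc (?G (u - 2 * m + c))"
          using grd_family_ge[of m "u + c"] 1 assms by simp
        also have "\<dots> \<le> Suc (Suc (?G (u - 2 * m)))"
          using less[of "u - 2 * m"] assms 1 by simp
        also have "\<dots> = Suc (?G u)"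
          using grd_family_ge[of m u] 1 assms by simp
        finally show ?thesis .
      next
        case 2
        then show ?thesis
          using grd_family_less[OF assms] grd_family_residue_add_coin[OF assms c5] by simp
      next
        case 3
        have "c \<le> m + 1" using c5 assms by auto
        then have "?G (u + c) = Suc (grd_family_residue m (u + c - 2 * m))"
          using grd_family_ge[of m "u + c"] grd_family_less[OF assms, of "u + c - 2 * m"] 3 assms
          by simp
        then show ?thesis
          using grd_family_residue_add_coin_wrap[OF assms c5] grd_family_less[OF assms] 3 by simp
      qed
    qed
  qed
qed

lemma not_canonical_family_prefix:
  assumes "4 < m"
  shows "\<not> canonical [1,2,3,m,m+1]"
proof -
  have sys: "is_system [1,2,3,m,m+1]"
    using assms by (simp add: is_system_def)
  have "grd [1,2,3,m,m+1] (m + m) = Suc (grd [1,2,3,m,m+1] (m - 1))"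
    using grd_append_ge[of "m+1" "m+m" "[1,2,3,m]"] assms by simp
  also have "grd [1,2,3,m,m+1] (m - 1) = grd [1,2,3] (m - 1)"
    using grd_append_less[of "m - 1" "m+1" "[1,2,3,m]"] grd_append_less[of "m - 1" m "[1,2,3]"]
      assms by simp
  finally have "grd [1,2,3,m,m+1] (m + m) = Suc ((m + 1) div 3)"
    using grd_321 assms by simp
  moreover have "opt [1,2,3,m,m+1] (m + m) \<le> 2"
    using opt_two_coins[OF sys, of m m] by simp
  moreover have "2 \<le> (m + 1) div 3"
    using assms by (simp add: less_eq_div_iff_mult_less_eq)
  ultimately have "opt [1,2,3,m,m+1] (m + m) < grd [1,2,3,m,m+1] (m + m)"
    by simp
  then show ?thesis
    unfolding canonical_iff_grd_le_opt by (metis not_le)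
qed

lemma canonical_extension_counterexample:
  assumes "is_system (B @ [d])" "is_system (B @ [d, e])"
    and "canonical (B @ [d, e])" "\<not> canonical (B @ [d])"
  obtains w c where "c \<in> set B" "e \<le> w" "c \<le> w" "w - c < d"
    "grd (B @ [d]) (w - c) < opt (B @ [d]) w" "opt (B @ [d]) w < grd (B @ [d]) w"
proof -
  obtain w where w: "counterexample (B @ [d]) w"
    and least: "\<And>v. v < w \<Longrightarrow> \<not> counterexample (B @ [d]) v"
    using assms(4) exists_least_iff[of "counterexample (B @ [d])"]
    unfolding canonical_def by blast
  have "e \<le> w"
    using counterexample_ge_appended_coin[of "B @ [d]" e w] assms w by simp
  then show thesis
    using least_counterexample_witness[OF assms(1) w least] w that
    unfolding counterexample_def by blast
qed

context
  fixes a b c d :: nat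
  assumes coins: "1 < a" "a < b" "b < c" "c < d"
begin

lemma system_prefix: "is_system [1,a,b,c,d]"
  using coins by (simp add: is_system_def)

lemma system_extension: "is_system [1,a,b,c,d,2*d-a]"
  using coins by (auto simp: is_system_def)

lemma canonical_extension_d_eq:
  assumes "canonical [1,a,b,c,d,2*d-a]" "2 * d - a < c + d"
  shows "d = c + a - 1"
proof -
  let ?e = "2 * d - a"
  have "grd [1,a,b,c,d,?e] (c + d) = Suc (grd [1,a,b,c,d,?e] (c + d - ?e))"
    using grd_append_ge[of ?e "c + d" "[1,a,b,c,d]"] assms(2) coins by simp
  also have "grd [1,a,b,c,d,?e] (c + d - ?e) = c + d - ?e"
    using assms(2) coins by (intro grd_1_Cons_less) auto
  finally have "Suc (c + d - ?e) \<le> 2"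
    using canonical_grd_two_coins[OF system_extension assms(1), of c d] by simp
  then show ?thesis
    using assms(2) coins by linarith
qed

lemma counterexample_witness_grd_ge:
  assumes "d = c + a - 1" "x \<in> {1,a,b,c}" "2 * d - a \<le> w" "w - x < d"
    and "grd [1,a,b,c,d] (w - x) < opt [1,a,b,c,d] w" "opt [1,a,b,c,d] w < grd [1,a,b,c,d] w"
  shows "a \<le> grd [1,a,b,c,d] (c - 1)"
proof -
  have "x \<le> c" using assms(2) coins by auto
  then have x: "x = c" and w: "w = c + d - 1"
    using assms(1,3,4) coins by linarith+
  have "grd [1,a,b,c,d] (w - x) = grd [1,a,b,c] (w - c)"
    using grd_append_less[of "w - c" d "[1,a,b,c]"] x w assms(1) coins by simp
  also have "\<dots> = Suc (grd [1,a,b,c] (a - 2))"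
    using grd_append_ge[of c "w - c" "[1,a,b]"] w assms(1) coins by simp
  also have "grd [1,a,b,c] (a - 2) = a - 2"
    using coins by (intro grd_1_Cons_less) auto
  finally have "a \<le> opt [1,a,b,c,d] w"
    using assms(5) coins by simp
  moreover have "grd [1,a,b,c,d] w = Suc (grd [1,a,b,c,d] (c - 1))"
    using grd_append_ge[of d w "[1,a,b,c]"] w coins by simp
  ultimately show ?thesis
    using assms(6) by simp
qed

lemma canonical_extension_b_eq:
  assumes "canonical [1,a,b,c,d,2*d-a]" "d = c + a - 1"
  shows "b + 1 = 2 * a"
proof -
  have "grd [1,a,b,c,d,2*d-a] (c + b) = grd [1,a,b,c,d] (c + b)"
    using grd_append_less[of "c + b" "2*d-a" "[1,a,b,c,d]"] assms(2) coins by simp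
  also have "\<dots> = Suc (grd [1,a,b,c,d] (b + 1 - a))"
    using grd_append_ge[of d "c + b" "[1,a,b,c]"] assms(2) coins by simp
  finally have "grd [1,a,b,c,d] (b + 1 - a) \<le> 1"
    using canonical_grd_two_coins[OF system_extension assms(1), of c b] by simp
  then have "b + 1 - a \<in> set [1,a,b,c,d]"
    using grd_le_1_imp_coin[OF system_prefix] coins by fastforce
  then show ?thesis
    using coins by auto
qed

lemma canonical_extension_a_eq:
  assumes "canonical [1,a,b,c,d,2*d-a]" "d = c + a - 1" "b + 1 = 2 * a"
    and "a \<le> grd [1,a,b,c,d] (c - 1)"
  shows "a = 2"
proof (rule ccontr)
  assume "a \<noteq> 2"
  then have a3: "3 \<le> a" using coins by simp
  have "grd [1,a,b,c,d,2*d-a] (c + c) = grd [1,a,b,c,d] (c + c)"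
    using grd_append_less[of "c + c" "2*d-a" "[1,a,b,c,d]"] a3 assms(2) coins by simp
  also have "\<dots> = Suc (grd [1,a,b,c,d] (c + 1 - a))"
    using grd_append_ge[of d "c + c" "[1,a,b,c]"] assms(2) coins by simp
  finally have "grd [1,a,b,c,d] (c + 1 - a) \<le> 1"
    using canonical_grd_two_coins[OF system_extension assms(1), of c c] by simp
  then have "c + 1 - a \<in> set [1,a,b,c,d]"
    using grd_le_1_imp_coin[OF system_prefix] coins by fastforce
  then have c: "c = a + b - 1"
    using assms(3) coins by auto
  have "grd [1,a,b,c,d] (c - 1) = grd [1,a,b] (c - 1)"
    using grd_append_less[of "c - 1" d "[1,a,b,c]"] grd_append_less[of "c - 1" c "[1,a,b]"]
      coins by simp
  also have "\<dots> = Suc (grd [1,a,b] (c - 1 - b))"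
    using grd_append_ge[of b "c - 1" "[1,a]"] c coins by simp
  also have "c - 1 - b = a - 2"
    using c by simp
  also have "grd [1,a,b] (a - 2) = a - 2"
    using coins by (intro grd_1_Cons_less) auto
  finally show False
    using assms(4) coins by simp
qed

lemma canonical_extension_shape:
  assumes "canonical [1,a,b,c,d,2*d-a]" "\<not> canonical [1,a,b,c,d]"
  shows "a = 2 \<and> b = 3 \<and> d = c + 1 \<and> 4 < c"
proof -
  obtain w x where x: "x \<in> set [1,a,b,c]" "2 * d - a \<le> w" "x \<le> w" "w - x < d"
    and w: "grd [1,a,b,c,d] (w - x) < opt [1,a,b,c,d] w" "opt [1,a,b,c,d] w < grd [1,a,b,c,d] w"
    by (rule canonical_extension_counterexample[of "[1,a,b,c]" d "2*d-a"])
      (use system_prefix system_extension assms in simp_all)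
  have "x \<le> c" using x(1) coins by auto
  then have d: "d = c + a - 1"
    using canonical_extension_d_eq[OF assms(1)] x coins by linarith
  have grd_c: "a \<le> grd [1,a,b,c,d] (c - 1)"
    using counterexample_witness_grd_ge[OF d _ x(2,4) w] x(1) by simp
  have b: "b + 1 = 2 * a"
    by (rule canonical_extension_b_eq[OF assms(1) d])
  have a: "a = 2"
    by (rule canonical_extension_a_eq[OF assms(1) d b grd_c])
  have "c \<noteq> 4"
  proof
    assume "c = 4"
    then have "grd [1,a,b,c,d] (c - 1) = 1"
      using a b d by (simp add: grd_def grd_desc.simps)
    then show False using grd_c a by simp
  qed
  then show ?thesis
    using a b d coins by simp
qed

end

theorem corollary4:
  fixes c2 c3 c4 c5 :: nat
  assumes "is_system [1, c2, c3, c4, c5, 2 * c5 - c2]"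
  shows "(canonical [1, c2, c3, c4, c5, 2 * c5 - c2] \<and> \<not> canonical [1, c2, c3, c4, c5])
     \<longleftrightarrow> ([1, c2, c3, c4, c5, 2 * c5 - c2] = [1, 2, 3, c4, c4 + 1, 2 * c4] \<and> c4 > 4)"
proof
  have coins: "1 < c2" "c2 < c3" "c3 < c4" "c4 < c5"
    using assms by (auto simp: is_system_def)
  assume "canonical [1, c2, c3, c4, c5, 2 * c5 - c2] \<and> \<not> canonical [1, c2, c3, c4, c5]"
  then have "c2 = 2 \<and> c3 = 3 \<and> c5 = c4 + 1 \<and> 4 < c4"
    using canonical_extension_shape[OF coins] by blast
  then show "[1, c2, c3, c4, c5, 2 * c5 - c2] = [1, 2, 3, c4, c4 + 1, 2 * c4] \<and> c4 > 4"
    by simp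
next
  assume "[1, c2, c3, c4, c5, 2 * c5 - c2] = [1, 2, 3, c4, c4 + 1, 2 * c4] \<and> c4 > 4"
  then show "canonical [1, c2, c3, c4, c5, 2 * c5 - c2] \<and> \<not> canonical [1, c2, c3, c4, c5]"
    using canonical_family not_canonical_family_prefix by simp
qed

end
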